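(* Let $\mathcal{V}$ be a veering triangulation, $w$ a weight system, $F_w=\{f:w_f>0\}$, and $\varphi\in\mathrm{Aut}^+(\mathcal{Q}_{\mathcal{V},w}\mid\tau_{\mathcal{V},w})$. If $e$ is the large edge of $f^+\in F_w^+$, then the regluing map sends $e$ to the large edge of $r^\varphi(f^+)\in F_w^-$.
   Context: Taut and veering structures. $\mathcal{V}$ is an ideal triangulation $\mathcal{T}$ of a compact oriented 3-manifold with a taut structure (a coorientation of faces such that each tetrahedron has two faces cooriented out—top faces, meeting in the top diagonal—and two cooriented in—bottom faces, meeting in the bottom diagonal—and every edge is the top diagonal of exactly one and the bottom diagonal of exactly one tetrahedron) and a veering structure (a red/blue edge coloring such that in each tetrahedron, for a top face with edges $e_0,e_1,e_2$ counterclockwise viewed from above and $e_0$ the top diagonal, $e_1$ is red, $e_2$ blue; for a bottom face with edges $e_0,e_1,e_2$ counterclockwise viewed from above and $e_0$ the bottom diagonal, $e_1$ is blue, $e_2$ red). The large edge of a face $f$ is the edge of $f$ that is the bottom diagonal of the tetrahedron of which $f$ is a bottom face. Carried surface. A weight system $w$ is a nonzero nonnegative integral solution of the branch equations (for each edge, faces on its two sides—separated by the tetrahedra where it is top/bottom diagonal—have equal weight sums). Pulling apart sheets of $\sum w_f f$ gives a surface triangulated by $\mathcal{Q}_{\mathcal{V},w}$ with $w_f$ copies of each face, ordered from lowermost $L(f)$ to uppermost $U(f)$; $\mathfrak{a}(y)$ is the copy immediately above $y$; the large edge of a copy of $f$ is the corresponding copy of the large edge of $f$, and $\tau_{\mathcal{V},w}$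 is the dual train track whose large branch in each triangle is dual to its large edge. $\mathrm{Aut}^+(\mathcal{Q}_{\mathcal{V},w}\mid\tau_{\mathcal{V},w})$ consists of orientation-preserving combinatorial automorphisms (bijection $\varphi$ of triangles with edge bijections $\varphi_g$ compatible with edge identifications) such that $\varphi_g$ maps the large edge of $g$ to the large edge of $\varphi(g)$ for all triangles $g$. Regluing map. Cutting $\mathcal{T}$ along the faces of $F_w$ gives, for each $f\in F_w$, a face $f^+\in F_w^+$ (top face of the tetrahedron below $f$) and $f^-\in F_w^-$ (bottom face of the tetrahedron above $f$), both naturally identified with $f$; the large edge of $f^\pm$ is the one corresponding to the large edge of $f$. For $f\in F_w$ let $g_1=\varphi(L(f))$ and, while $g_i$ is not an uppermost copy, $g_{i+1}=\varphi(\mathfrak{a}(g_i))$; it ends at $g_k=U(f')$. Then $r^\varphi(f^+)=f'^-$, and the regluing map sends an edge of $f^+$ to the edge of $f'^-$ obtained by the composite: edge of $f$ $\to$ corresponding edge of $L(f)$ $\to$ (by $\varphi_{L(f)}$) edge of $g_1$ $\to$ (by $\mathfrak{a}$) edge of $\mathfrak{a}(g_1)$ $\to$ (by $\varphi_{\mathfrak{a}(g_1)}$) edge of $g_2\to\cdots\to$ edge of $g_k=U(f')$ $\to$ corresponding edge of $f'$. *)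

theory Defs
  imports Main
begin

text \<open>
  Each face is a triangle whose three sides are indexed 0,1,2
  (counterclockwise viewed from above, via the coorientation).  The function
  large f < 3 gives the side of f that is its large edge (the bottom diagonal of the
  tetrahedron of which f is a bottom face).  The faces f+ and f- obtained by cutting
  are naturally identified with f, so their sides are the sides of f and their large
  side is large f.

  The triangles of Q_{V,w} are the copies (f,i) with f in F and i < w f, numbered
  from the lowermost copy L(f) = (f,0) to the uppermost copy U(f) = (f, w f - 1).
  The sides of a copy are the sides of f; the large side of (f,i) is large f.
  The copy immediately above (f,i) is (f,i+1); the induced map on sides is the identity.
\<close>

definition copies :: "'f set \<Rightarrow> ('f \<Rightarrow> nat) \<Rightarrow> ('f \<times> nat) set" where
  "copies F w = {(f, i). f \<in> F \<and> i < w f}"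

definition F_w :: "'f set \<Rightarrow> ('f \<Rightarrow> nat) \<Rightarrow> 'f set" where
  "F_w F w = {f \<in> F. 0 < w f}"

definition lowermost :: "'f \<Rightarrow> 'f \<times> nat" where
  "lowermost f = (f, 0)"

definition is_uppermost :: "('f \<Rightarrow> nat) \<Rightarrow> 'f \<times> nat \<Rightarrow> bool" where
  "is_uppermost w g \<longleftrightarrow> snd g = w (fst g) - 1"

definition copy_above :: "'f \<times> nat \<Rightarrow> 'f \<times> nat" where
  "copy_above g = (fst g, Suc (snd g))"

text \<open>An orientation preserving bijection of the sides {0,1,2} of a triangle
  (counterclockwise labelled) is a cyclic rotation.\<close>
definition side_rotation :: "(nat \<Rightarrow> nat) \<Rightarrow> bool" where
  "side_rotation \<sigma> \<longleftrightarrow> (\<exists>k<3. \<forall>j<3. \<sigma> j = (j + k) mod 3)"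

definition aut_plus ::
  "'f set \<Rightarrow> ('f \<Rightarrow> nat) \<Rightarrow> ('f \<Rightarrow> nat) \<Rightarrow> ('f \<times> nat \<Rightarrow> 'f \<times> nat)
     \<Rightarrow> ('f \<times> nat \<Rightarrow> nat \<Rightarrow> nat) \<Rightarrow> bool" where
  "aut_plus F w large \<phi> \<phi>s \<longleftrightarrow>
     bij_betw \<phi> (copies F w) (copies F w) \<and>
     (\<forall>g \<in> copies F w. side_rotation (\<phi>s g) \<and>
                        \<phi>s g (large (fst g)) = large (fst (\<phi> g)))"

text \<open>The regluing chain: pairs (g_i, side of g_i).  Start at g_1 = phi(L f) with the
  image under phis (L f) of side j of f; one step passes to the copy above and applies
  phi again.\<close>
definition reglue_step ::
  "('f \<times> nat \<Rightarrow> 'f \<times> nat) \<Rightarrow> ('f \<times> nat \<Rightarrow> nat \<Rightarrow> nat)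
     \<Rightarrow> ('f \<times> nat) \<times> nat \<Rightarrow> ('f \<times> nat) \<times> nat" where
  "reglue_step \<phi> \<phi>s p = (\<phi> (copy_above (fst p)), \<phi>s (copy_above (fst p)) (snd p))"

definition reglue_seq ::
  "('f \<times> nat \<Rightarrow> 'f \<times> nat) \<Rightarrow> ('f \<times> nat \<Rightarrow> nat \<Rightarrow> nat) \<Rightarrow> 'f \<Rightarrow> nat
     \<Rightarrow> nat \<Rightarrow> ('f \<times> nat) \<times> nat" where
  "reglue_seq \<phi> \<phi>s f j n =
     (reglue_step \<phi> \<phi>s ^^ n) (\<phi> (lowermost f), \<phi>s (lowermost f) j)"

end

theory Submission
  imports Defs
begin

text \<open>
  Both the automorphism and the passage to the copy above carry large edges to large
  edges, so every edge of the regluing chain that starts at the large edge of f is large.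
  The chain does reach an uppermost copy: as long as it does not, its triangles are
  pairwise distinct, because phi and the passage to the copy above are injective and
  phi (L f) is not the image of a copy lying above another one; but there are only
  finitely many copies.
\<close>

lemma escapes_finite_set_if_injective_steps:
  assumes "finite S" and "inj_on \<phi> S" and "inj a" and "b \<in> S" and "b \<notin> range a"
    and "x 0 = \<phi> b" and "\<And>n. x (Suc n) = \<phi> (a (x n))"
  shows "\<exists>n. a (x n) \<notin> S"
proof (rule ccontr)
  assume "\<not> (\<exists>n. a (x n) \<notin> S)"
  then have stays: "a (x n) \<in> S" for n
    by blast
  have "x i = x j \<Longrightarrow> i = j" for i j
  proof (induction i arbitrary: j)
    case 0
    show ?case
    proof (cases j)
      case 0
      then show ?thesis
        by simp
    next
      case (Suc j')
      then have "\<phi> b = \<phi> (a (x j'))"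
        using "0" assms(6,7) by simp
      then have "b = a (x j')"
        by (rule inj_onD[OF assms(2) _ assms(4) stays])
      then show ?thesis
        using assms(5) by blast
    qed
  next
    case (Suc i)
    show ?case
    proof (cases j)
      case 0
      then have "\<phi> b = \<phi> (a (x i))"
        using Suc.prems assms(6,7) by simp
      then have "b = a (x i)"
        by (rule inj_onD[OF assms(2) _ assms(4) stays])
      then show ?thesis
        using assms(5) by blast
    next
      case (Suc j')
      then have "\<phi> (a (x i)) = \<phi> (a (x j'))"
        using Suc.prems assms(7) by simp
      then have "a (x i) = a (x j')"
        by (rule inj_onD[OF assms(2) _ stays stays])
      then have "x i = x j'"
        by (rule injD[OF assms(3)])
      then show ?thesis
        using Suc.IH Suc by blast
    qed
  qed
  then have "inj x"
    by (rule injI)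
  moreover have "x n \<in> \<phi> ` S" for n
    using assms(4,6,7) stays by (cases n) auto
  then have "range x \<subseteq> \<phi> ` S"
    by blast
  ultimately show False
    using assms(1) finite_subset infinite_UNIV_nat by (metis finite_imageD finite_imageI)
qed

lemma finite_copies: "finite F \<Longrightarrow> finite (copies F w)"
proof -
  assume "finite F"
  moreover have "copies F w \<subseteq> Sigma F (\<lambda>h. {..<w h})"
    unfolding copies_def by auto
  ultimately show ?thesis
    by (meson finite_SigmaI finite_lessThan finite_subset)
qed

lemma lowermost_in_copies: "f \<in> F_w F w \<Longrightarrow> lowermost f \<in> copies F w"
  unfolding F_w_def copies_def lowermost_def by simp

lemma copy_above_in_copies:
  "g \<in> copies F w \<Longrightarrow> \<not> is_uppermost w g \<Longrightarrow> copy_above g \<in> copies F w"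
  unfolding copies_def copy_above_def is_uppermost_def by auto

lemma inj_copy_above: "inj copy_above"
  by (rule injI) (simp add: copy_above_def prod_eq_iff)

lemma lowermost_notin_range_copy_above: "lowermost f \<notin> range copy_above"
  unfolding lowermost_def copy_above_def by auto

lemma aut_plusD:
  assumes "aut_plus F w large \<phi> \<phi>s"
  shows "bij_betw \<phi> (copies F w) (copies F w)"
    and "g \<in> copies F w \<Longrightarrow> \<phi>s g (large (fst g)) = large (fst (\<phi> g))"
  using assms unfolding aut_plus_def by auto

lemma reglue_seq_0 [simp]:
  "reglue_seq \<phi> \<phi>s f j 0 = (\<phi> (lowermost f), \<phi>s (lowermost f) j)"
  unfolding reglue_seq_def by simp

lemma reglue_seq_Suc [simp]:
  "reglue_seq \<phi> \<phi>s f j (Suc n) =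
     (\<phi> (copy_above (fst (reglue_seq \<phi> \<phi>s f j n))),
      \<phi>s (copy_above (fst (reglue_seq \<phi> \<phi>s f j n))) (snd (reglue_seq \<phi> \<phi>s f j n)))"
  unfolding reglue_seq_def reglue_step_def by simp

lemma reglue_seq_in_copies:
  assumes "aut_plus F w large \<phi> \<phi>s" and "f \<in> F_w F w"
    and "\<forall>i<n. \<not> is_uppermost w (fst (reglue_seq \<phi> \<phi>s f j i))"
  shows "fst (reglue_seq \<phi> \<phi>s f j n) \<in> copies F w"
  using assms(3)
proof (induction n)
  case 0
  show ?case
    using bij_betwE[OF aut_plusD(1)[OF assms(1)]] lowermost_in_copies[OF assms(2)] by simp
next
  case (Suc n)
  then have "copy_above (fst (reglue_seq \<phi> \<phi>s f j n)) \<in> copies F w"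
    by (simp add: copy_above_in_copies)
  then show ?case
    using bij_betwE[OF aut_plusD(1)[OF assms(1)]] by simp
qed

lemma reglue_seq_large:
  assumes "aut_plus F w large \<phi> \<phi>s" and "f \<in> F_w F w"
    and "\<forall>i<n. \<not> is_uppermost w (fst (reglue_seq \<phi> \<phi>s f (large f) i))"
  shows "snd (reglue_seq \<phi> \<phi>s f (large f) n) = large (fst (fst (reglue_seq \<phi> \<phi>s f (large f) n)))"
  using assms(3)
proof (induction n)
  case 0
  show ?case
    using aut_plusD(2)[OF assms(1) lowermost_in_copies[OF assms(2)]] by (simp add: lowermost_def)
next
  case (Suc n)
  let ?g = "fst (reglue_seq \<phi> \<phi>s f (large f) n)"
  have above: "copy_above ?g \<in> copies F w"
    using Suc.prems reglue_seq_in_copies[OF assms(1,2)] by (simp add: copy_above_in_copies)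
  have "snd (reglue_seq \<phi> \<phi>s f (large f) (Suc n))
          = \<phi>s (copy_above ?g) (large (fst (copy_above ?g)))"
    using Suc.IH Suc.prems by (simp add: copy_above_def)
  also have "\<dots> = large (fst (\<phi> (copy_above ?g)))"
    using aut_plusD(2)[OF assms(1) above] .
  finally show ?case
    by simp
qed

lemma reglue_seq_reaches_uppermost:
  assumes "finite F" and "aut_plus F w large \<phi> \<phi>s" and "f \<in> F_w F w"
  shows "\<exists>k. is_uppermost w (fst (reglue_seq \<phi> \<phi>s f j k))"
proof (rule ccontr)
  assume "\<nexists>k. is_uppermost w (fst (reglue_seq \<phi> \<phi>s f j k))"
  then have "copy_above (fst (reglue_seq \<phi> \<phi>s f j n)) \<in> copies F w" for n
    using reglue_seq_in_copies[OF assms(2,3)] by (simp add: copy_above_in_copies)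
  moreover have "\<exists>n. copy_above (fst (reglue_seq \<phi> \<phi>s f j n)) \<notin> copies F w"
    using finite_copies[OF assms(1)] bij_betw_imp_inj_on[OF aut_plusD(1)[OF assms(2)]]
      inj_copy_above lowermost_in_copies[OF assms(3)] lowermost_notin_range_copy_above
    by (rule escapes_finite_set_if_injective_steps) simp_all
  ultimately show False
    by blast
qed

theorem lemma3p18:
  fixes F :: "'f set" and w :: "'f \<Rightarrow> nat" and large :: "'f \<Rightarrow> nat"
    and \<phi> :: "'f \<times> nat \<Rightarrow> 'f \<times> nat" and \<phi>s :: "'f \<times> nat \<Rightarrow> nat \<Rightarrow> nat"
    and f :: 'f
  assumes "finite F"
    and "\<forall>h \<in> F. large h < 3"
    and "\<exists>h \<in> F. 0 < w h"
    and "aut_plus F w large \<phi> \<phi>s"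
    and "f \<in> F_w F w"
  shows "\<exists>k. is_uppermost w (fst (reglue_seq \<phi> \<phi>s f (large f) k))
            \<and> (\<forall>i<k. \<not> is_uppermost w (fst (reglue_seq \<phi> \<phi>s f (large f) i)))
            \<and> snd (reglue_seq \<phi> \<phi>s f (large f) k)
                = large (fst (fst (reglue_seq \<phi> \<phi>s f (large f) k)))"
proof -
  let ?uppermost = "\<lambda>k. is_uppermost w (fst (reglue_seq \<phi> \<phi>s f (large f) k))"
  define k where "k = (LEAST k. ?uppermost k)"
  have "?uppermost k"
    unfolding k_def using reglue_seq_reaches_uppermost[OF assms(1,4,5)] by (rule LeastI_ex)
  moreover have first: "\<forall>i<k. \<not> ?uppermost i"
    unfolding k_def using not_less_Least by blast
  moreover have "snd (reglue_seq \<phi> \<phi>s f (large f) k)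
                  = large (fst (fst (reglue_seq \<phi> \<phi>s f (large f) k)))"
    using reglue_seq_large[OF assms(4,5) first] .
  ultimately show ?thesis
    by blast
qed

end
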